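(* Let $n,m\ge1$ and $p_{n,m}$ stable of degree $n$ in $z$ and $m$ in $w$. For every fixed $z\in\mathbb{T}$ and every $\eta\in\mathbb{C}$, $$\int_{\mathbb{T}}|L(z,w;\eta)|^2\,\frac{|dw|}{2\pi|p_{n,m}(z,w)|^2}=\bar z^n L(z,\eta;\eta),$$ and consequently, for $0\le i,j\le m-1$, $$\int_{\mathbb{T}}\overline{a_i(z,w)}\,a_j(z,w)\,\frac{|dw|}{2\pi|p_{n,m}(z,w)|^2}=T_{i,j}(z).$$
   Context: $p_{n,m}$ is stable if it has no zeros in $\{|z|\le1,|w|\le1\}$. Write $p_{n,m}(z,w)=\sum_{i=0}^m p_i(z)w^i$, $\bar p_i(z)=\overline{p_i(\bar z)}$, and $\tilde p_{n,m}(z,w)=z^nw^m\overline{p_{n,m}(1/\bar z,1/\bar w)}$. $L(z,w;\eta)=z^n\frac{p_{n,m}(z,w)\overline{p_{n,m}(1/\bar z,\eta)}-\tilde p_{n,m}(z,w)\overline{\tilde p_{n,m}(1/\bar z,\eta)}}{1-w\bar\eta}$, a polynomial in $z,w,\bar\eta$, and $a_j$ are defined by $L=\sum_{j=0}^{m-1}a_j(z,w)\bar\eta^j$. $T_m(z)$ is the $m\times m$ matrix (indices $0,\dots,m-1$) $T_m(z)=M_1M_2-M_3M_4$, where $M_1$ is lower triangular with $(r,s)$ entry $p_{r-s}(z)$ for $r\ge s$; $M_2$ upper triangular with $(r,s)$ entry $\bar p_{s-r}(1/z)$ for $s\ge r$; $M_3$ lower triangular with $(r,s)$ entry $\bar p_{m-r+s}(1/z)$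 for $r\ge s$; $M_4$ upper triangular with $(r,s)$ entry $p_{m-s+r}(z)$ for $s\ge r$. $T_{i,j}$ is its $(i,j)$ entry. *)

theory Defs
  imports "HOL-Analysis.Analysis" "HOL-Computational_Algebra.Polynomial"
begin

text \<open>A bivariate polynomial p(z,w) = sum_i p_i(z) w^i is represented as a
  polynomial in w whose coefficients are polynomials in z.\<close>

definition pc :: "complex poly poly \<Rightarrow> nat \<Rightarrow> complex \<Rightarrow> complex" where
  "pc P i z = poly (coeff P i) z"

definition pbar :: "complex poly poly \<Rightarrow> nat \<Rightarrow> complex \<Rightarrow> complex" where
  "pbar P i z = cnj (poly (coeff P i) (cnj z))"

definition ev2 :: "complex poly poly \<Rightarrow> complex \<Rightarrow> complex \<Rightarrow> complex" where
  "ev2 P z w = (\<Sum>i\<le>degree P. pc P i z * w ^ i)"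

definition degz :: "complex poly poly \<Rightarrow> nat" where
  "degz P = (MAX i\<in>{..degree P}. degree (coeff P i))"

definition stable2 :: "complex poly poly \<Rightarrow> bool" where
  "stable2 P \<longleftrightarrow> (\<forall>z w. cmod z \<le> 1 \<longrightarrow> cmod w \<le> 1 \<longrightarrow> ev2 P z w \<noteq> 0)"

text \<open>Reflection z^n w^m conj(p(1/conj z, 1/conj w)), written out as the polynomial it is.\<close>
definition rev2 :: "complex poly poly \<Rightarrow> complex \<Rightarrow> complex \<Rightarrow> complex" where
  "rev2 P z w = (\<Sum>i\<le>degree P. \<Sum>k\<le>degz P.
      cnj (coeff (coeff P i) k) * z ^ (degz P - k) * w ^ (degree P - i))"

definition Lraw :: "complex poly poly \<Rightarrow> complex \<Rightarrow> complex \<Rightarrow> complex \<Rightarrow> complex" where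
  "Lraw P z w \<eta> = z ^ degz P *
     (ev2 P z w * cnj (ev2 P (1 / cnj z) \<eta>) - rev2 P z w * cnj (rev2 P (1 / cnj z) \<eta>))
     / (1 - w * cnj \<eta>)"

text \<open>L(z,w;eta): the quotient, continuously (polynomially) extended across w * conj eta = 1.\<close>
definition Lfun :: "complex poly poly \<Rightarrow> complex \<Rightarrow> complex \<Rightarrow> complex \<Rightarrow> complex" where
  "Lfun P z w \<eta> = (if w * cnj \<eta> \<noteq> 1 then Lraw P z w \<eta> else Lim (at w) (\<lambda>t. Lraw P z t \<eta>))"

definition acoef :: "complex poly poly \<Rightarrow> complex \<Rightarrow> complex \<Rightarrow> nat \<Rightarrow> complex" where
  "acoef P z w j = coeff (THE Q. \<forall>\<eta>. poly Q (cnj \<eta>) = Lfun P z w \<eta>) j"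

definition Tmat :: "complex poly poly \<Rightarrow> complex \<Rightarrow> nat \<Rightarrow> nat \<Rightarrow> complex" where
  "Tmat P z r s =
     (\<Sum>k<degree P. (if k \<le> r then pc P (r - k) z else 0) * (if k \<le> s then pbar P (s - k) (1 / z) else 0))
   - (\<Sum>k<degree P. (if k \<le> r then pbar P (degree P - r + k) (1 / z) else 0)
                    * (if k \<le> s then pc P (degree P - s + k) z else 0))"

end

theory Submission
  imports Defs "HOL-Complex_Analysis.Cauchy_Integral_Formula"
begin

(* Fix z on the unit circle and write q(w) = sum_{i<=m} q_i w^i for the slice p(z,w); stability
   means q has no zeros in the closed unit disc.  The proof has three independent ingredients.
   (1) Mean value property: for such q and any polynomial f, the circle average of f/q is
       f(0)/q(0).  This is Cauchy's integral formula on the unit circle.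
   (2) Christoffel-Darboux identity (pure algebra on the coefficient sequence q_0,...,q_m):
       with the m x m matrix T of the paper,
       (1 - w y) sum_{r,s<m} T_{rs} w^r y^s = q(w) qbar(y) - qrev(w) qrev_bar(y).
   (3) Gram matrix: the moments G_{jr} = int w^j conj(w)^r dmu, dmu = |dw|/(2 pi |q(w)|^2),
       form a matrix G with G * conj(T) = I.  Row-wise, the mean value property gives the two
       "boundary" relations, and G_{j+1,r+1} = G_{jr} propagates them along diagonals.
   Both integral identities then follow: the kernel L(z,.;eta) is z^n times the polynomial
   with coefficient matrix T, its coefficients a_j are columns of T, and G * conj(T) = I turns
   the integrals into T_{ij} and into the reproducing value L(z,eta;eta). *)

section \<open>The mean value property on the unit circle\<close>

text \<open>Cauchy's integral formula at the centre, parametrised by the angle.\<close>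
lemma circle_mean_value:
  fixes g :: "complex \<Rightarrow> complex"
  assumes "continuous_on (cball 0 1) g" and "g holomorphic_on ball 0 1"
  shows "((\<lambda>t. g (cis t)) has_integral 2 * pi * g 0) {0..2*pi}"
proof -
  have "((\<lambda>u. g u / (u - 0)) has_contour_integral 2 * of_real pi * \<i> * g 0) (circlepath 0 1)"
    using Cauchy_integral_circlepath[OF assms, of 0] by simp
  then have "((\<lambda>t. g (cis t) / cis t * \<i> * cis t) has_integral 2 * of_real pi * \<i> * g 0) {0..2*pi}"
    by (simp add: circlepath_def has_contour_integral_part_circlepath_iff)
  then have "((\<lambda>t. -\<i> * (\<i> * g (cis t))) has_integral -\<i> * (2 * of_real pi * \<i> * g 0)) {0..2*pi}"
    by (intro has_integral_mult_right) (simp add: mult_ac)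
  then show ?thesis by (simp add: algebra_simps)
qed

lemma mean_value_poly_quotient:
  fixes f Q :: "complex poly"
  assumes "\<forall>w. cmod w \<le> 1 \<longrightarrow> poly Q w \<noteq> 0"
  shows "((\<lambda>t. poly f (cis t) / poly Q (cis t)) has_integral 2 * pi * poly f 0 / poly Q 0) {0..2*pi}"
proof -
  have "continuous_on (cball 0 1) (\<lambda>w. poly f w / poly Q w)"
    using assms by (intro continuous_intros) auto
  moreover have "(\<lambda>w. poly f w / poly Q w) holomorphic_on ball 0 1"
    using assms by (intro holomorphic_intros) auto
  ultimately show ?thesis using circle_mean_value by fastforce
qed

section \<open>The matrix \<open>T\<close> and the Christoffel--Darboux identity\<close>

text \<open>For a coefficient sequence \<open>q\<close> of a polynomial of degree \<open>m\<close>, \<open>bez_gen q m r s\<close> is the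
  \<open>(r,s)\<close> entry of \<open>q q\<^sup>* - q\<^sup>\<sharp> q\<^sup>\<sharp>\<^sup>*\<close> (with \<open>q\<^sup>\<sharp>\<close> the conjugate reversed sequence), and
  \<open>bez q m\<close> sums it along the diagonal through \<open>(r,s)\<close>; for \<open>r,s < m\<close> this is exactly the
  product formula \<open>T = M\<^sub>1M\<^sub>2 - M\<^sub>3M\<^sub>4\<close> of the paper.\<close>
definition bez_gen :: "(nat \<Rightarrow> complex) \<Rightarrow> nat \<Rightarrow> nat \<Rightarrow> nat \<Rightarrow> complex" where
  "bez_gen q m r s = q r * cnj (q s) - cnj (q (m - r)) * q (m - s)"

definition bez :: "(nat \<Rightarrow> complex) \<Rightarrow> nat \<Rightarrow> nat \<Rightarrow> nat \<Rightarrow> complex" where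
  "bez q m r s = (\<Sum>k\<le>min r s. bez_gen q m (r - k) (s - k))"

lemma bez_gen_diff:
  "bez_gen q m r s = bez q m r s - (if r = 0 \<or> s = 0 then 0 else bez q m (r - 1) (s - 1))"
proof (cases "r = 0 \<or> s = 0")
  case False
  then have "min r s = Suc (min (r - 1) (s - 1))" by auto
  then show ?thesis using False unfolding bez_def by (simp only: sum.atMost_Suc_shift) simp
qed (auto simp: bez_def)

lemma sum_atMost_reflect:
  fixes f :: "nat \<Rightarrow> nat \<Rightarrow> 'a::comm_monoid_add"
  shows "(\<Sum>k\<le>r. f (r - k) k) = (\<Sum>k\<le>r. f k (r - k))"
proof -
  have "(\<Sum>k\<le>r. f (r - k) k) = (\<Sum>k\<le>r. f (r - k) (r - (r - k)))"
    by (intro sum.cong) auto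
  also have "\<dots> = (\<Sum>k\<le>r. f k (r - k))"
    using sum.atLeastAtMost_rev[of "\<lambda>k. f k (r - k)" 0 r] by (simp add: atLeast0AtMost)
  finally show ?thesis .
qed

text \<open>The row and the column with index \<open>m\<close> of \<open>bez\<close> vanish, so \<open>T\<close> is really \<open>m \<times> m\<close>.\<close>
lemma bez_last_row:
  assumes "s \<le> m" shows "bez q m m s = 0"
proof -
  have "bez q m m s = (\<Sum>k\<le>s. q (m - k) * cnj (q (s - k))) - (\<Sum>k\<le>s. cnj (q k) * q (m - (s - k)))"
    unfolding bez_def bez_gen_def using assms by (simp add: sum_subtractf min_absorb2)
  then show ?thesis
    using sum_atMost_reflect[of "\<lambda>i k. cnj (q i) * q (m - k)" s] by (simp add: mult.commute)
qed

lemma bez_last_col: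
  assumes "r \<le> m" shows "bez q m r m = 0"
proof -
  have "bez q m r m = (\<Sum>k\<le>r. q (r - k) * cnj (q (m - k))) - (\<Sum>k\<le>r. cnj (q (m - (r - k))) * q k)"
    unfolding bez_def bez_gen_def using assms by (simp add: sum_subtractf min_absorb1)
  then show ?thesis
    using sum_atMost_reflect[of "\<lambda>i k. q i * cnj (q (m - k))" r] by (simp add: mult.commute)
qed

definition cd_kernel :: "(nat \<Rightarrow> complex) \<Rightarrow> nat \<Rightarrow> complex \<Rightarrow> complex \<Rightarrow> complex" where
  "cd_kernel q m w y = (\<Sum>r<m. \<Sum>s<m. bez q m r s * w ^ r * y ^ s)"

text \<open>Expanding the
  right-hand side gives the generator, which telescopes along diagonals (lemma bez_gen_diff).\<close>
lemma christoffel_darboux: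
  "(1 - w * y) * cd_kernel q m w y =
    (\<Sum>r\<le>m. q r * w ^ r) * (\<Sum>s\<le>m. cnj (q s) * y ^ s)
  - (\<Sum>r\<le>m. cnj (q (m - r)) * w ^ r) * (\<Sum>s\<le>m. q (m - s) * y ^ s)"
proof -
  let ?K = "cd_kernel q m w y"
  have expand: "(\<Sum>r\<le>m. q r * w ^ r) * (\<Sum>s\<le>m. cnj (q s) * y ^ s)
      - (\<Sum>r\<le>m. cnj (q (m - r)) * w ^ r) * (\<Sum>s\<le>m. q (m - s) * y ^ s)
    = (\<Sum>r\<le>m. \<Sum>s\<le>m. bez_gen q m r s * w ^ r * y ^ s)"
    unfolding sum_product bez_gen_def by (simp add: sum_subtractf[symmetric] algebra_simps)
  have full: "(\<Sum>r\<le>m. \<Sum>s\<le>m. bez q m r s * w ^ r * y ^ s) = ?K"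
    unfolding cd_kernel_def lessThan_Suc_atMost[symmetric] sum.lessThan_Suc
    by (simp add: bez_last_row bez_last_col cong: sum.cong_simp)
  have shifted: "(\<Sum>r\<le>m. \<Sum>s\<le>m. (if r = 0 \<or> s = 0 then 0 else bez q m (r - 1) (s - 1)) * w ^ r * y ^ s)
      = w * y * ?K"
    unfolding cd_kernel_def lessThan_Suc_atMost[symmetric] sum.lessThan_Suc_shift
    by (simp add: sum_distrib_left algebra_simps)
  have "(\<Sum>r\<le>m. \<Sum>s\<le>m. bez_gen q m r s * w ^ r * y ^ s)
      = (\<Sum>r\<le>m. \<Sum>s\<le>m. bez q m r s * w ^ r * y ^ s)
      - (\<Sum>r\<le>m. \<Sum>s\<le>m. (if r = 0 \<or> s = 0 then 0 else bez q m (r - 1) (s - 1)) * w ^ r * y ^ s)"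
    unfolding bez_gen_diff by (simp add: sum_subtractf[symmetric] algebra_simps)
  then show ?thesis using expand full shifted by (simp add: algebra_simps)
qed

section \<open>Moments of the measure \<open>|dw| / (2\<pi> |q(w)|\<^sup>2)\<close>\<close>

lemma unit_mult_cnj: "cmod z = 1 \<Longrightarrow> z * cnj z = 1"
  using complex_norm_square[of z] by simp

lemma unit_pow_mult_cnj: "cmod z = 1 \<Longrightarrow> z ^ n * cnj z ^ n = 1"
  by (metis unit_mult_cnj power_mult_distrib power_one)

definition circle_weight :: "complex poly \<Rightarrow> real \<Rightarrow> complex" where
  "circle_weight Q t = complex_of_real (2 * pi * (cmod (poly Q (cis t)))\<^sup>2)"

definition weighted_monomial :: "complex poly \<Rightarrow> nat \<Rightarrow> nat \<Rightarrow> real \<Rightarrow> complex" where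
  "weighted_monomial Q j r t = cis t ^ j * cnj (cis t) ^ r / circle_weight Q t"

definition gram :: "complex poly \<Rightarrow> nat \<Rightarrow> nat \<Rightarrow> complex" where
  "gram Q j r = integral {0..2*pi} (weighted_monomial Q j r)"

lemma gram_shift: "gram Q (Suc j) (Suc r) = gram Q j r"
proof -
  have "weighted_monomial Q (Suc j) (Suc r) t = weighted_monomial Q j r t" for t
    using unit_mult_cnj[of "cis t"] unfolding weighted_monomial_def by (simp add: algebra_simps)
  then show ?thesis unfolding gram_def by presburger
qed

text \<open>The product \<open>G \<cdot> conj(T)\<close>, with the summation extended to the vanishing row \<open>m\<close> of \<open>T\<close>.\<close>
definition gram_bez :: "complex poly \<Rightarrow> (nat \<Rightarrow> complex) \<Rightarrow> nat \<Rightarrow> nat \<Rightarrow> nat \<Rightarrow> complex" where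
  "gram_bez Q q m j s = (\<Sum>r\<le>m. gram Q j r * cnj (bez q m r s))"

locale stable_slice =
  fixes q :: "nat \<Rightarrow> complex" and Q :: "complex poly" and m :: nat
  assumes poly_Q: "\<And>w. poly Q w = (\<Sum>i\<le>m. q i * w ^ i)"
    and Q_stable: "\<forall>w. cmod w \<le> 1 \<longrightarrow> poly Q w \<noteq> 0"
begin

lemma Q_cis_nonzero: "poly Q (cis t) \<noteq> 0"
  using Q_stable by simp

lemma circle_weight_eq: "circle_weight Q t = 2 * pi * (poly Q (cis t) * cnj (poly Q (cis t)))"
  unfolding circle_weight_def by (simp add: complex_norm_square[symmetric])

lemma integral_weighted_monomials:
  assumes "finite A"
  shows "integral {0..2*pi} (\<lambda>t. \<Sum>x\<in>A. c x * weighted_monomial Q (f x) (g x) t)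
       = (\<Sum>x\<in>A. c x * gram Q (f x) (g x))"
proof -
  have "weighted_monomial Q j r integrable_on {0..2*pi}" for j r
    unfolding weighted_monomial_def circle_weight_def
    by (intro integrable_continuous_interval continuous_intros) (use Q_cis_nonzero in auto)
  then show ?thesis
    using assms unfolding gram_def by (subst integral_sum) (auto intro: integrable_on_mult_right)
qed

lemma integral_weighted_monomials_double:
  assumes "finite A" "finite B"
  shows "integral {0..2*pi} (\<lambda>t. \<Sum>a\<in>A. \<Sum>b\<in>B. c a b * weighted_monomial Q a b t)
       = (\<Sum>a\<in>A. \<Sum>b\<in>B. c a b * gram Q a b)"
  using integral_weighted_monomials[of "A \<times> B" "\<lambda>(a, b). c a b" fst snd] assms
  by (simp add: sum.cartesian_product split_def)

text \<open>First boundary relation: against \<open>conj(q)\<close> the \<open>j\<close>-th row of \<open>G\<close> sees the circle average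
  of \<open>w\<^sup>j / q(w)\<close>, which is \<open>\<delta>\<^sub>j\<^sub>0 / q(0)\<close> by the mean value property.\<close>
lemma gram_conj_coeffs: "(\<Sum>r\<le>m. cnj (q r) * gram Q j r) = (if j = 0 then 1 / q 0 else 0)"
proof -
  have pointwise: "(\<Sum>r\<le>m. cnj (q r) * weighted_monomial Q j r t)
      = (1 / (2*pi)) * (poly (monom 1 j) (cis t) / poly Q (cis t))" for t
  proof -
    have "(\<Sum>r\<le>m. cnj (q r) * weighted_monomial Q j r t)
        = cis t ^ j * cnj (\<Sum>r\<le>m. q r * cis t ^ r) / circle_weight Q t"
      unfolding weighted_monomial_def by (simp add: sum_distrib_left sum_divide_distrib algebra_simps)
    then show ?thesis
      using Q_cis_nonzero[of t] unfolding circle_weight_eq poly_Q[symmetric]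
      by (simp add: poly_monom field_simps)
  qed
  have "((\<lambda>t. (1 / (2*pi)) * (poly (monom 1 j) (cis t) / poly Q (cis t))) has_integral
        (1 / (2*pi)) * (2 * pi * poly (monom (1::complex) j) 0 / poly Q 0)) {0..2*pi}"
    by (intro has_integral_mult_right mean_value_poly_quotient Q_stable)
  then have "integral {0..2*pi} (\<lambda>t. \<Sum>r\<le>m. cnj (q r) * weighted_monomial Q j r t)
      = poly (monom (1::complex) j) 0 / poly Q 0"
    unfolding pointwise by (simp add: integral_unique)
  moreover have "poly Q 0 = q 0"
    using poly_Q[of 0] by (simp add: zero_power)
  ultimately show ?thesis
    by (simp add: integral_weighted_monomials[where f="\<lambda>r. j" and g="\<lambda>r. r", symmetric] poly_monom)
qed

text \<open>Second boundary relation: against the reversed coefficients, \<open>j < m\<close>, one obtains the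
  conjugate circle average of \<open>w\<^sup>m\<^sup>-\<^sup>j / q(w)\<close>, which vanishes.\<close>
lemma gram_reversed_coeffs:
  assumes "j < m"
  shows "(\<Sum>r\<le>m. q (m - r) * gram Q j r) = 0"
proof -
  have pointwise: "(\<Sum>r\<le>m. q (m - r) * weighted_monomial Q j r t)
      = (1 / (2*pi)) * cnj (poly (monom 1 (m - j)) (cis t) / poly Q (cis t))" for t
  proof -
    let ?w = "cis t"
    have split: "cnj ?w ^ r = cnj ?w ^ m * ?w ^ (m - r)" if "r \<le> m" for r
    proof -
      have "cnj ?w ^ m = cnj ?w ^ r * cnj ?w ^ (m - r)"
        using that by (simp flip: power_add)
      then show ?thesis using unit_pow_mult_cnj[of ?w "m - r"] by (simp add: mult_ac)
    qed
    have summand: "q (m - r) * weighted_monomial Q j r t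
        = ?w ^ j * cnj ?w ^ m * (q (m - r) * ?w ^ (m - r)) / circle_weight Q t" if "r \<le> m" for r
      unfolding weighted_monomial_def split[OF that] by (simp add: mult_ac)
    have "(\<Sum>r\<le>m. q (m - r) * weighted_monomial Q j r t)
        = ?w ^ j * cnj ?w ^ m * (\<Sum>r\<le>m. q (m - r) * ?w ^ (m - r)) / circle_weight Q t"
      unfolding sum_distrib_left sum_divide_distrib by (intro sum.cong refl) (simp add: summand)
    also have "(\<Sum>r\<le>m. q (m - r) * ?w ^ (m - r)) = poly Q ?w"
      unfolding poly_Q using sum_atMost_reflect[of "\<lambda>i k. q i * ?w ^ i" m] by simp
    also have "?w ^ j * cnj ?w ^ m = cnj ?w ^ (m - j)"
    proof -
      have "cnj ?w ^ m = cnj ?w ^ j * cnj ?w ^ (m - j)"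
        using assms by (simp flip: power_add)
      then show ?thesis using unit_pow_mult_cnj[of ?w j] by (simp add: mult.assoc[symmetric])
    qed
    finally show ?thesis
      using Q_cis_nonzero[of t] unfolding circle_weight_eq by (simp add: poly_monom field_simps)
  qed
  have "((\<lambda>t. cnj (poly (monom 1 (m - j)) (cis t) / poly Q (cis t))) has_integral
        cnj (2 * pi * poly (monom (1::complex) (m - j)) 0 / poly Q 0)) {0..2*pi}"
    using has_integral_cnj[THEN iffD2, OF mean_value_poly_quotient[OF Q_stable]] by (simp add: o_def)
  then have "((\<lambda>t. (1 / (2*pi)) * cnj (poly (monom 1 (m - j)) (cis t) / poly Q (cis t))) has_integral
        (1 / (2*pi)) * cnj (2 * pi * poly (monom (1::complex) (m - j)) 0 / poly Q 0)) {0..2*pi}"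
    by (rule has_integral_mult_right)
  then have "integral {0..2*pi} (\<lambda>t. \<Sum>r\<le>m. q (m - r) * weighted_monomial Q j r t) = 0"
    unfolding pointwise using assms by (simp add: integral_unique poly_monom)
  then show ?thesis
    by (simp add: integral_weighted_monomials[where f="\<lambda>r. j" and g="\<lambda>r. r", symmetric])
qed

text \<open>The first column of \<open>G \<cdot> conj(T)\<close>: \<open>T\<^sub>r\<^sub>0\<close> is the generator alone, so both boundary relations
  apply; \<open>q(0) \<noteq> 0\<close> by stability.\<close>
lemma gram_bez_first_col:
  assumes "j < m"
  shows "gram_bez Q q m j 0 = (if j = 0 then 1 else 0)"
proof -
  have "gram_bez Q q m j 0
      = q 0 * (\<Sum>r\<le>m. cnj (q r) * gram Q j r) - cnj (q m) * (\<Sum>r\<le>m. q (m - r) * gram Q j r)"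
    unfolding gram_bez_def sum_distrib_left sum_subtractf[symmetric]
    by (intro sum.cong refl) (simp add: bez_def bez_gen_def algebra_simps)
  moreover have "q 0 \<noteq> 0"
    using poly_Q[of 0] Q_stable by (auto simp: zero_power)
  ultimately show ?thesis
    using gram_conj_coeffs[of j] gram_reversed_coeffs[OF assms] by simp
qed

text \<open>Away from the first row and column, \<open>G \<cdot> conj(T)\<close> is constant along diagonals: the
  generator part is killed by the boundary relations and the rest is moved by gram_shift.\<close>
lemma gram_bez_diagonal:
  assumes "1 \<le> j" "j < m" "1 \<le> s" "s \<le> m"
  shows "gram_bez Q q m j s = gram_bez Q q m (j - 1) (s - 1)"
proof -
  have peel: "bez q m r s = bez_gen q m r s + (if r = 0 then 0 else bez q m (r - 1) (s - 1))" for r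
    using bez_gen_diff[of q m r s] assms by simp
  have "gram_bez Q q m j s
      = (q s * (\<Sum>r\<le>m. cnj (q r) * gram Q j r) - cnj (q (m - s)) * (\<Sum>r\<le>m. q (m - r) * gram Q j r))
      + (\<Sum>r\<le>m. gram Q j r * (if r = 0 then 0 else cnj (bez q m (r - 1) (s - 1))))"
    unfolding gram_bez_def sum_distrib_left sum_subtractf[symmetric] sum.distrib[symmetric]
    by (intro sum.cong refl) (simp add: peel bez_gen_def algebra_simps)
  also have "q s * (\<Sum>r\<le>m. cnj (q r) * gram Q j r) - cnj (q (m - s)) * (\<Sum>r\<le>m. q (m - r) * gram Q j r) = 0"
    using gram_conj_coeffs[of j] gram_reversed_coeffs[OF assms(2)] assms by simp
  also have "(\<Sum>r\<le>m. gram Q j r * (if r = 0 then 0 else cnj (bez q m (r - 1) (s - 1))))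
      = (\<Sum>r<m. gram Q (j - 1) r * cnj (bez q m r (s - 1)))"
    unfolding lessThan_Suc_atMost[symmetric] sum.lessThan_Suc_shift
    using gram_shift[of Q "j - 1"] assms by simp
  also have "\<dots> = gram_bez Q q m (j - 1) (s - 1)"
    unfolding gram_bez_def lessThan_Suc_atMost[symmetric] sum.lessThan_Suc
    using bez_last_row[of "s - 1" m q] assms by simp
  finally show ?thesis by simp
qed

text \<open>Walking down the diagonal to the first column gives the entries on and below it \<dots>\<close>
lemma gram_bez_lower: "s \<le> j \<Longrightarrow> j < m \<Longrightarrow> gram_bez Q q m j s = (if j = s then 1 else 0)"
proof (induction s arbitrary: j)
  case 0
  then show ?case by (simp add: gram_bez_first_col)
next
  case (Suc s)
  then show ?case using gram_bez_diagonal[of j "Suc s"] Suc.IH[of "j - 1"] by auto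
qed

text \<open>\<dots> and walking up to the vanishing last column (lemma bez_last_col) those above it.\<close>
lemma gram_bez_upper: "s \<le> m \<Longrightarrow> j < s \<Longrightarrow> gram_bez Q q m j s = 0"
proof (induction "m - s" arbitrary: j s)
  case 0
  then show ?case by (simp add: gram_bez_def bez_last_col)
next
  case (Suc k)
  then have "gram_bez Q q m (Suc j) (Suc s) = 0" by (intro Suc.hyps) auto
  then show ?case using Suc gram_bez_diagonal[of "Suc j" "Suc s"] by simp
qed

lemma gram_bez_inverse:
  assumes "j < m" "s \<le> m"
  shows "(\<Sum>r<m. gram Q j r * cnj (bez q m r s)) = (if j = s then 1 else 0)"
proof -
  have "(\<Sum>r<m. gram Q j r * cnj (bez q m r s)) = gram_bez Q q m j s"
    unfolding gram_bez_def lessThan_Suc_atMost[symmetric] sum.lessThan_Suc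
    using assms by (simp add: bez_last_row)
  also have "\<dots> = (if j = s then 1 else 0)"
    using assms gram_bez_lower gram_bez_upper by (cases "s \<le> j") auto
  finally show ?thesis .
qed

text \<open>Writing \<open>K(w,y) = \<Sum>\<^sub>r a\<^sub>r w\<^sup>r\<close>, the integral is
  \<open>\<Sum>\<^sub>r a\<^sub>r (G conj(a))\<^sub>r\<close>, and \<open>G conj(T) = I\<close> gives \<open>(G conj(a))\<^sub>r = conj(y)\<^sup>r\<close>.\<close>
lemma cd_kernel_reproducing:
  "integral {0..2*pi} (\<lambda>t. cd_kernel q m (cis t) y * cnj (cd_kernel q m (cis t) y) / circle_weight Q t)
   = cd_kernel q m (cnj y) y"
proof -
  define a where "a r = (\<Sum>s<m. bez q m r s * y ^ s)" for r
  have kernel_a: "cd_kernel q m w y = (\<Sum>r<m. a r * w ^ r)" for w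
    unfolding cd_kernel_def a_def by (simp add: sum_distrib_right sum_distrib_left mult_ac)
  have gram_a: "(\<Sum>r'<m. gram Q r r' * cnj (a r')) = cnj y ^ r" if "r < m" for r
  proof -
    have "(\<Sum>r'<m. gram Q r r' * cnj (a r')) = (\<Sum>s<m. cnj y ^ s * (\<Sum>r'<m. gram Q r r' * cnj (bez q m r' s)))"
      unfolding a_def cnj_sum sum_distrib_left by (subst sum.swap) (simp add: mult_ac)
    also have "\<dots> = (\<Sum>s<m. cnj y ^ s * (if r = s then 1 else 0))"
      using that by (intro sum.cong refl) (simp add: gram_bez_inverse)
    finally show ?thesis using that by (simp add: if_distrib cong: if_cong)
  qed
  have "integral {0..2*pi} (\<lambda>t. cd_kernel q m (cis t) y * cnj (cd_kernel q m (cis t) y) / circle_weight Q t)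
      = integral {0..2*pi} (\<lambda>t. \<Sum>r<m. \<Sum>r'<m. (a r * cnj (a r')) * weighted_monomial Q r r' t)"
    unfolding kernel_a weighted_monomial_def cnj_sum sum_product sum_divide_distrib by (simp add: mult_ac)
  also have "\<dots> = (\<Sum>r<m. a r * (\<Sum>r'<m. gram Q r r' * cnj (a r')))"
    unfolding integral_weighted_monomials_double[OF finite_lessThan finite_lessThan]
    by (simp add: sum_distrib_left mult_ac)
  also have "\<dots> = (\<Sum>r<m. a r * cnj y ^ r)"
    using gram_a by simp
  finally show ?thesis unfolding kernel_a .
qed

text \<open>The columns \<open>c\<^sub>i(w) = \<Sum>\<^sub>r T\<^sub>r\<^sub>i w\<^sup>r\<close> of \<open>T\<close> have Gram matrix \<open>T\<close>:
  \<open>\<integral> conj(c\<^sub>i) c\<^sub>j d\<mu> = \<Sum>\<^sub>r T\<^sub>r\<^sub>j (G conj(T))\<^sub>r\<^sub>i = T\<^sub>i\<^sub>j\<close>.\<close>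
lemma bez_columns_gram:
  assumes "i < m" "j < m"
  shows "integral {0..2*pi} (\<lambda>t. cnj (\<Sum>r<m. bez q m r i * cis t ^ r) * (\<Sum>r<m. bez q m r j * cis t ^ r)
                                  / circle_weight Q t)
       = bez q m i j"
proof -
  have "integral {0..2*pi} (\<lambda>t. cnj (\<Sum>r<m. bez q m r i * cis t ^ r) * (\<Sum>r<m. bez q m r j * cis t ^ r)
                                  / circle_weight Q t)
      = integral {0..2*pi} (\<lambda>t. \<Sum>r'<m. \<Sum>r<m. (bez q m r' j * cnj (bez q m r i)) * weighted_monomial Q r' r t)"
    unfolding weighted_monomial_def cnj_sum sum_product sum_divide_distrib
    by (subst sum.swap) (simp add: mult_ac)
  also have "\<dots> = (\<Sum>r'<m. bez q m r' j * (\<Sum>r<m. gram Q r' r * cnj (bez q m r i)))"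
    unfolding integral_weighted_monomials_double[OF finite_lessThan finite_lessThan]
    by (simp add: sum_distrib_left mult_ac)
  also have "\<dots> = (\<Sum>r'<m. bez q m r' j * (if r' = i then 1 else 0))"
    using assms by (intro sum.cong refl) (simp add: gram_bez_inverse)
  also have "\<dots> = bez q m i j"
    using assms by (simp add: if_distrib cong: if_cong)
  finally show ?thesis .
qed

end

section \<open>Specialisation to a stable bivariate polynomial\<close>

definition zslice :: "complex poly poly \<Rightarrow> complex \<Rightarrow> complex poly" where
  "zslice P z = (\<Sum>i\<le>degree P. monom (pc P i z) i)"

lemma poly_zslice: "poly (zslice P z) w = ev2 P z w"
  unfolding zslice_def ev2_def by (simp add: poly_sum poly_monom)

lemma circle_weight_zslice:
  "circle_weight (zslice P z) t = complex_of_real (2 * pi * (cmod (ev2 P z (cis t)))\<^sup>2)"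
  unfolding circle_weight_def poly_zslice ..

lemma stable_slice_zslice:
  assumes "stable2 P" "cmod z \<le> 1"
  shows "stable_slice (\<lambda>i. pc P i z) (zslice P z) (degree P)"
  using assms unfolding stable_slice_def stable2_def poly_zslice by (simp add: ev2_def)

lemma poly_upto:
  fixes p :: "'a::comm_semiring_1 poly"
  assumes "degree p \<le> N"
  shows "poly p x = (\<Sum>k\<le>N. coeff p k * x ^ k)"
  unfolding poly_altdef by (rule sum.mono_neutral_left) (use assms in \<open>auto simp: coeff_eq_0\<close>)

lemma rev2_unit_circle:
  assumes z: "cmod z = 1"
  shows "rev2 P z w = z ^ degz P * (\<Sum>r\<le>degree P. cnj (pc P (degree P - r) z) * w ^ r)"
proof -
  let ?n = "degz P" and ?m = "degree P"
  have coeff_rev: "(\<Sum>k\<le>?n. cnj (coeff (coeff P i) k) * z ^ (?n - k)) = z ^ ?n * cnj (pc P i z)"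
    if "i \<le> ?m" for i
  proof -
    have "degree (coeff P i) \<le> ?n"
      unfolding degz_def using that by (intro Max_ge) auto
    then have "z ^ ?n * cnj (pc P i z) = (\<Sum>k\<le>?n. cnj (coeff (coeff P i) k) * (z ^ ?n * cnj z ^ k))"
      unfolding pc_def by (simp add: poly_upto sum_distrib_left mult_ac)
    also have "\<dots> = (\<Sum>k\<le>?n. cnj (coeff (coeff P i) k) * z ^ (?n - k))"
    proof (intro sum.cong refl arg_cong2[where f="(*)"])
      fix k assume "k \<in> {..?n}"
      then have "z ^ ?n = z ^ (?n - k) * z ^ k" by (simp flip: power_add)
      then show "z ^ ?n * cnj z ^ k = z ^ (?n - k)"
        using unit_pow_mult_cnj[OF z, of k] by (simp add: mult.assoc)
    qed
    finally show ?thesis by simp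
  qed
  have "rev2 P z w = (\<Sum>i\<le>?m. (z ^ ?n * cnj (pc P i z)) * w ^ (?m - i))"
    unfolding rev2_def by (intro sum.cong refl) (simp add: coeff_rev[symmetric] sum_distrib_right)
  also have "\<dots> = (\<Sum>r\<le>?m. (z ^ ?n * cnj (pc P (?m - r) z)) * w ^ r)"
    using sum_atMost_reflect[of "\<lambda>i r. (z ^ ?n * cnj (pc P i z)) * w ^ r" ?m] by simp
  finally show ?thesis by (simp add: sum_distrib_left mult_ac)
qed

text \<open>On \<open>|z| = 1\<close> the kernel \<open>L(z,w;\<eta>)\<close> is \<open>z\<^sup>n K(w, conj \<eta>)\<close> for the Christoffel--Darboux
  kernel of the slice; off the line \<open>w conj(\<eta>) = 1\<close> this is the identity christoffel_darboux, and
  on it \<open>L\<close> is defined as the limit, which the polynomial \<open>K\<close> attains by continuity.\<close>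
lemma Lfun_unit_circle:
  assumes z: "cmod z = 1"
  shows "Lfun P z w \<eta> = z ^ degz P * cd_kernel (\<lambda>i. pc P i z) (degree P) w (cnj \<eta>)"
proof -
  let ?q = "\<lambda>i. pc P i z" and ?m = "degree P" and ?n = "degz P"
  let ?K = "\<lambda>w. z ^ ?n * cd_kernel ?q ?m w (cnj \<eta>)"
  let ?R = "\<lambda>w. (\<Sum>r\<le>?m. cnj (?q (?m - r)) * w ^ r)"
  have inv_z: "1 / cnj z = z"
    using unit_mult_cnj[OF z] z by (auto simp: divide_eq_eq)
  have rev_rev: "rev2 P z w * cnj (rev2 P z \<eta>) = ?R w * cnj (?R \<eta>)" for w
    using unit_pow_mult_cnj[OF z, of ?n] unfolding rev2_unit_circle[OF z] by (simp add: mult_ac)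
  have raw: "Lraw P z w \<eta> = ?K w" if "w * cnj \<eta> \<noteq> 1" for w
  proof -
    have "(1 - w * cnj \<eta>) * cd_kernel ?q ?m w (cnj \<eta>) = ev2 P z w * cnj (ev2 P z \<eta>) - ?R w * cnj (?R \<eta>)"
      unfolding christoffel_darboux ev2_def by simp
    moreover have "1 - w * cnj \<eta> \<noteq> 0" using that by simp
    ultimately have "cd_kernel ?q ?m w (cnj \<eta>)
        = (ev2 P z w * cnj (ev2 P z \<eta>) - ?R w * cnj (?R \<eta>)) / (1 - w * cnj \<eta>)"
      by (simp add: eq_divide_eq mult.commute)
    then show ?thesis unfolding Lraw_def inv_z rev_rev by simp
  qed
  show ?thesis
  proof (cases "w * cnj \<eta> = 1")
    case True
    then have "cnj \<eta> \<noteq> 0" by auto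
    with True have "t * cnj \<eta> \<noteq> 1" if "t \<noteq> w" for t
      using that by (metis mult_right_cancel)
    then have "\<forall>\<^sub>F t in at w. ?K t = Lraw P z t \<eta>"
      unfolding eventually_at_filter by (auto intro!: always_eventually raw[symmetric])
    moreover have "(?K \<longlongrightarrow> ?K w) (at w)"
      unfolding cd_kernel_def by (intro tendsto_intros)
    ultimately have "((\<lambda>t. Lraw P z t \<eta>) \<longlongrightarrow> ?K w) (at w)"
      by (rule Lim_transform_eventually[rotated])
    then show ?thesis unfolding Lfun_def using True by (simp add: tendsto_Lim)
  qed (simp add: Lfun_def raw)
qed

text \<open>Hence the coefficient \<open>a\<^sub>j(z,w)\<close> of \<open>conj(\<eta>)\<^sup>j\<close> is \<open>z\<^sup>n\<close> times the \<open>j\<close>-th column polynomial of \<open>T\<close>;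
  the polynomial in \<open>conj \<eta>\<close> representing \<open>L\<close> is unique since it is determined pointwise.\<close>
lemma acoef_unit_circle:
  assumes z: "cmod z = 1" and j: "j < degree P"
  shows "acoef P z w j = z ^ degz P * (\<Sum>r<degree P. bez (\<lambda>i. pc P i z) (degree P) r j * w ^ r)"
proof -
  let ?q = "\<lambda>i. pc P i z" and ?m = "degree P" and ?n = "degz P"
  define c where "c s = z ^ ?n * (\<Sum>r<?m. bez ?q ?m r s * w ^ r)" for s
  define A where "A = (\<Sum>s<?m. monom (c s) s)"
  have "poly A y = (\<Sum>s<?m. \<Sum>r<?m. z ^ ?n * (bez ?q ?m r s * w ^ r * y ^ s))" for y
    unfolding A_def c_def by (simp add: poly_sum poly_monom sum_distrib_left sum_distrib_right mult_ac)
  also have "\<dots> y = z ^ ?n * cd_kernel ?q ?m w y" for y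
    unfolding cd_kernel_def sum_distrib_left by (rule sum.swap)
  finally have A_L: "poly A (cnj \<eta>) = Lfun P z w \<eta>" for \<eta>
    using Lfun_unit_circle[OF z] by simp
  have "(THE Q. \<forall>\<eta>. poly Q (cnj \<eta>) = Lfun P z w \<eta>) = A"
  proof (rule the_equality)
    fix Q assume "\<forall>\<eta>. poly Q (cnj \<eta>) = Lfun P z w \<eta>"
    then have "poly Q y = poly A y" for y
      using A_L[of "cnj y"] by (metis complex_cnj_cnj)
    then show "Q = A" by (metis poly_eq_poly_eq_iff ext)
  qed (use A_L in simp)
  then show ?thesis
    unfolding acoef_def using j by (simp add: A_def coeff_sum coeff_monom c_def)
qed

text \<open>On \<open>|z| = 1\<close> the matrix \<open>T\<^sub>m(z) = M\<^sub>1M\<^sub>2 - M\<^sub>3M\<^sub>4\<close> of the paper is \<open>bez\<close> for the slice, since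
  \<open>bar p\<^sub>k(1/z) = conj(p\<^sub>k(z))\<close>.\<close>
lemma Tmat_unit_circle:
  assumes z: "cmod z = 1" and r: "r < degree P" and s: "s < degree P"
  shows "Tmat P z r s = bez (\<lambda>i. pc P i z) (degree P) r s"
proof -
  let ?q = "\<lambda>i. pc P i z" and ?m = "degree P"
  have triangle: "(\<Sum>k<?m. (if k \<le> r then a k else 0) * (if k \<le> s then b k else 0)) = (\<Sum>k\<le>min r s. a k * b k)"
    for a b :: "nat \<Rightarrow> complex"
    using r s by (intro sum.mono_neutral_cong_right) auto
  have "cnj (1 / z) = z"
    using unit_mult_cnj[OF z] z by (auto simp: divide_eq_eq)
  then have pbar_inv: "pbar P k (1 / z) = cnj (?q k)" for k
    unfolding pbar_def pc_def by simp
  have "Tmat P z r s = (\<Sum>k\<le>min r s. ?q (r - k) * cnj (?q (s - k)))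
      - (\<Sum>k\<le>min r s. cnj (?q (?m - (r - k))) * ?q (?m - (s - k)))"
    unfolding Tmat_def pbar_inv triangle using r s by (simp add: Suc_diff_le)
  then show ?thesis
    unfolding bez_def bez_gen_def by (simp add: sum_subtractf)
qed

lemma Lfun_norm_integral:
  assumes "stable2 P" and z: "cmod z = 1"
  shows "integral {0..2*pi} (\<lambda>t. of_real ((cmod (Lfun P z (cis t) \<eta>))\<^sup>2
             / (2 * pi * (cmod (ev2 P z (cis t)))\<^sup>2)))
       = cnj z ^ degz P * Lfun P z \<eta> \<eta>"
proof -
  let ?K = "\<lambda>w. cd_kernel (\<lambda>i. pc P i z) (degree P) w (cnj \<eta>)"
  interpret stable_slice "\<lambda>i. pc P i z" "zslice P z" "degree P"
    using stable_slice_zslice assms by simp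
  have "of_real ((cmod (Lfun P z (cis t) \<eta>))\<^sup>2 / (2 * pi * (cmod (ev2 P z (cis t)))\<^sup>2))
      = ?K (cis t) * cnj (?K (cis t)) / circle_weight (zslice P z) t" for t
  proof -
    have "of_real ((cmod (Lfun P z (cis t) \<eta>))\<^sup>2 / (2 * pi * (cmod (ev2 P z (cis t)))\<^sup>2))
        = complex_of_real ((cmod (?K (cis t)))\<^sup>2) / circle_weight (zslice P z) t"
      unfolding Lfun_unit_circle[OF z] circle_weight_zslice using z by (simp add: norm_mult norm_power)
    then show ?thesis by (simp only: complex_norm_square)
  qed
  then show ?thesis
    using cd_kernel_reproducing[of "cnj \<eta>"] unit_pow_mult_cnj[OF z, of "degz P"]
    by (simp add: Lfun_unit_circle[OF z] mult.assoc[symmetric] mult.commute)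
qed

lemma acoef_gram_integral:
  assumes "stable2 P" and z: "cmod z = 1" and "i < degree P" "j < degree P"
  shows "integral {0..2*pi} (\<lambda>t. cnj (acoef P z (cis t) i) * acoef P z (cis t) j
             / of_real (2 * pi * (cmod (ev2 P z (cis t)))\<^sup>2))
       = Tmat P z i j"
proof -
  let ?col = "\<lambda>k w. \<Sum>r<degree P. bez (\<lambda>i. pc P i z) (degree P) r k * w ^ r"
  interpret stable_slice "\<lambda>i. pc P i z" "zslice P z" "degree P"
    using stable_slice_zslice assms by simp
  have "cnj (acoef P z (cis t) i) * acoef P z (cis t) j / of_real (2 * pi * (cmod (ev2 P z (cis t)))\<^sup>2)
      = cnj (?col i (cis t)) * ?col j (cis t) / circle_weight (zslice P z) t" for t
    unfolding acoef_unit_circle[OF z assms(3)] acoef_unit_circle[OF z assms(4)] circle_weight_zslice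
    using unit_pow_mult_cnj[OF z, of "degz P"] by (simp add: mult_ac)
  then show ?thesis
    using bez_columns_gram assms Tmat_unit_circle[OF z] by simp
qed

theorem mainTheorem11:
  fixes P :: "complex poly poly" and n m :: nat
  assumes "n \<ge> 1" and "m \<ge> 1" and "degree P = m" and "degz P = n" and "stable2 P"
  shows "(\<forall>z \<eta>. cmod z = 1 \<longrightarrow>
            integral {0..2*pi} (\<lambda>t. of_real ((cmod (Lfun P z (cis t) \<eta>))\<^sup>2
                 / (2 * pi * (cmod (ev2 P z (cis t)))\<^sup>2)))
            = cnj z ^ n * Lfun P z \<eta> \<eta>)
       \<and> (\<forall>z i j. cmod z = 1 \<longrightarrow> i < m \<longrightarrow> j < m \<longrightarrow>
            integral {0..2*pi} (\<lambda>t. cnj (acoef P z (cis t) i) * acoef P z (cis t) j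
                 / of_real (2 * pi * (cmod (ev2 P z (cis t)))\<^sup>2))
            = Tmat P z i j)"
  using Lfun_norm_integral[OF assms(5)] acoef_gram_integral[OF assms(5)] assms(3,4) by simp

end
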